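(* Consider a vanilla fully connected ReLU network with intermediate outputs $y^l=\sqrt2\,\phi\big(\frac{1}{\sqrt{n_{l-1}}}W^ly^{l-1}\big)$ for $l=1,\dots,L$, where $y^0\in\mathbb{R}^{n_0}$ is the (deterministic) input and the weight matrices $W^l\in\mathbb{R}^{n_l\times n_{l-1}}$ have i.i.d. standard normal entries, independent across layers. Then for each $l\in[L]$, $$\mathbb{E}\big[\|y^l\|_2^2\big]=\frac{n_l}{n_{l-1}}\mathbb{E}\big[\|y^{l-1}\|_2^2\big],\qquad \mathbb{E}\big[\|y^l\|_2^4\big]=\frac{n_l(n_l+5)}{n_{l-1}^2}\mathbb{E}\big[\|y^{l-1}\|_2^4\big].$$
   Context: $\phi(t)=\max(0,t)$ applied coordinatewise; $\|\cdot\|_2$ is the Euclidean norm. *)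

theory Defs
  imports "HOL-Probability.Probability"
begin

definition relu :: "real \<Rightarrow> real" where
  "relu t = max 0 t"

text \<open>Euclidean norm of a vector in R^k, represented as a function nat => real
  whose coordinates 0..k-1 are relevant.\<close>
definition vnorm :: "nat \<Rightarrow> (nat \<Rightarrow> real) \<Rightarrow> real" where
  "vnorm k v = sqrt (\<Sum>i<k. (v i)^2)"

text \<open>Intermediate outputs of the vanilla ReLU network: widths n, weights
  W l i j (layer l, row i < n l, column j < n (l-1)), input x = y^0.\<close>
fun relu_net :: "(nat \<Rightarrow> nat) \<Rightarrow> (nat \<Rightarrow> nat \<Rightarrow> nat \<Rightarrow> real) \<Rightarrow> (nat \<Rightarrow> real) \<Rightarrow> nat \<Rightarrow> nat \<Rightarrow> real" where
  "relu_net n W x 0 = x"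
| "relu_net n W x (Suc l) =
     (\<lambda>i. sqrt 2 * relu ((1 / sqrt (real (n l))) * (\<Sum>j<n l. W (Suc l) i j * relu_net n W x l j)))"

end

theory Submission
  imports Defs
begin

text \<open>
  Fix the previous layer y = y^(l-1) and write m = n (l - 1), p = n l. Each preactivation
  Z_i = sum_j W^l_ij y_j is then a centred Gaussian of variance |y|^2, and distinct rows are
  independent. As the Gaussian density is even, relu(Z_i)^2 has half the second and fourth
  moments of Z_i, namely |y|^2/2 and 3|y|^4/2. Since |y^l|^2 = (2/m) sum_i relu(Z_i)^2, its
  conditional mean is (p/m) |y|^2 and its conditional second moment is
  (4/m^2) (p 3|y|^4/2 + p (p - 1) |y|^4/4) = p (p + 5)/m^2 |y|^4.
  The weights of the earlier layers are independent of W^l, so integrating over them gives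
  the claim.
\<close>

lemma relu_nonneg: "0 \<le> relu t"
  by (simp add: relu_def)

lemma relu_mult_nonneg: "0 \<le> c \<Longrightarrow> relu (c * t) = c * relu t"
  by (simp add: relu_def max_mult_distrib_left)

lemma borel_measurable_relu [measurable]: "relu \<in> borel_measurable borel"
  unfolding relu_def[abs_def] by measurable

lemma power2_vnorm: "(vnorm k v)\<^sup>2 = (\<Sum>i<k. (v i)\<^sup>2)"
  unfolding vnorm_def by (simp add: sum_nonneg)

lemma vnorm_nonneg: "0 \<le> vnorm k v"
  by (simp add: vnorm_def sum_nonneg)

lemma vnorm_cong: "(\<And>i. i < k \<Longrightarrow> v i = w i) \<Longrightarrow> vnorm k v = vnorm k w"
  unfolding vnorm_def by simp

lemma borel_measurable_PiM_component [measurable]: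
  "(\<lambda>f. f i) \<in> borel_measurable (PiM I (\<lambda>_. (borel :: real measure)))"
proof (cases "i \<in> I")
  case False
  \<comment> \<open>the elements of the product space are extensional, so the projection is constant\<close>
  have "(\<lambda>_. undefined) \<in> borel_measurable (PiM I (\<lambda>_. (borel :: real measure)))"
    by simp
  then show ?thesis
    by (rule measurable_cong[THEN iffD1, rotated]) (use False in \<open>auto simp: space_PiM PiE_def extensional_def\<close>)
qed measurable

lemma (in prob_space) indep_sets_reindex:
  assumes ind: "indep_sets F I" and h: "inj_on h T" "h ` T \<subseteq> I"
  shows "indep_sets (\<lambda>t. F (h t)) T"
  unfolding indep_sets_def
proof (intro conjI ballI allI impI)
  show "F (h t) \<subseteq> events" if "t \<in> T" for t
    using ind h that unfolding indep_sets_def by auto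
next
  fix J A assume J: "J \<subseteq> T" "J \<noteq> {}" "finite J" and A: "A \<in> (\<Pi> j\<in>J. F (h j))"
  define A' where "A' = A \<circ> the_inv_into J h"
  have hJ: "inj_on h J"
    using h J inj_on_subset by blast
  have A'h: "A' (h j) = A j" if "j \<in> J" for j
    using hJ that by (simp add: A'_def the_inv_into_f_f)
  have "A' \<in> (\<Pi> i\<in>h ` J. F i)"
    using A A'h by auto
  then have "prob (\<Inter>i\<in>h ` J. A' i) = (\<Prod>i\<in>h ` J. prob (A' i))"
    using ind J h unfolding indep_sets_def by (metis finite_imageI image_is_empty image_mono order_trans)
  then show "prob (\<Inter>j\<in>J. A j) = (\<Prod>j\<in>J. prob (A j))"
    using hJ A'h by (simp add: prod.reindex)
qed

lemma (in prob_space) indep_vars_reindex: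
  assumes "indep_vars M' X I" "inj_on h T" "h ` T \<subseteq> I"
  shows "indep_vars (\<lambda>t. M' (h t)) (\<lambda>t. X (h t)) T"
  using assms indep_sets_reindex[of _ I h T] unfolding indep_vars_def2 by auto

lemma (in prob_space) nn_integral_indep_var:
  assumes ind: "indep_var S X T Y" and f: "f \<in> borel_measurable (S \<Otimes>\<^sub>M T)"
  shows "(\<integral>\<^sup>+\<omega>. f (X \<omega>, Y \<omega>) \<partial>M) = (\<integral>\<^sup>+s. (\<integral>\<^sup>+\<omega>. f (s, Y \<omega>) \<partial>M) \<partial>distr M S X)"
proof -
  have rv: "random_variable S X" "random_variable T Y"
    and eq: "distr M S X \<Otimes>\<^sub>M distr M T Y = distr M (S \<Otimes>\<^sub>M T) (\<lambda>x. (X x, Y x))"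
    using ind[unfolded indep_var_distribution_eq] by auto
  interpret PX: prob_space "distr M S X" using rv(1) by (rule prob_space_distr)
  interpret PY: prob_space "distr M T Y" using rv(2) by (rule prob_space_distr)
  interpret PP: pair_sigma_finite "distr M S X" "distr M T Y" ..
  have "(\<integral>\<^sup>+\<omega>. f (X \<omega>, Y \<omega>) \<partial>M) = (\<integral>\<^sup>+z. f z \<partial>(distr M S X \<Otimes>\<^sub>M distr M T Y))"
    using rv f by (simp add: eq nn_integral_distr)
  also have "\<dots> = (\<integral>\<^sup>+s. \<integral>\<^sup>+t. f (s, t) \<partial>distr M T Y \<partial>distr M S X)"
    using f by (subst PY.nn_integral_fst[symmetric]) auto
  also have "\<dots> = (\<integral>\<^sup>+s. (\<integral>\<^sup>+\<omega>. f (s, Y \<omega>) \<partial>M) \<partial>distr M S X)"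
    using rv f by (intro nn_integral_cong) (simp add: nn_integral_distr)
  finally show ?thesis .
qed

lemma (in prob_space) integral_indep_var_fibrewise:
  fixes f :: "'s \<times> 's \<Rightarrow> real" and g :: "'s \<Rightarrow> real"
  assumes ind: "indep_var S X T Y"
    and [measurable]: "f \<in> borel_measurable (S \<Otimes>\<^sub>M T)" and f_nonneg: "\<And>z. 0 \<le> f z"
    and [measurable]: "g \<in> borel_measurable S" and g_nonneg: "\<And>s. 0 \<le> g s"
    and "0 \<le> c"
    and fibre: "\<And>s. s \<in> space S \<Longrightarrow> has_bochner_integral M (\<lambda>\<omega>. f (s, Y \<omega>)) (c * g s)"
  shows "(\<integral>\<omega>. f (X \<omega>, Y \<omega>) \<partial>M) = c * (\<integral>\<omega>. g (X \<omega>) \<partial>M)"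
proof -
  have [measurable]: "X \<in> measurable M S" "Y \<in> measurable M T"
    using ind by (simp_all add: indep_var_rv1 indep_var_rv2)
  have "(\<integral>\<^sup>+\<omega>. f (X \<omega>, Y \<omega>) \<partial>M) = (\<integral>\<^sup>+s. (\<integral>\<^sup>+\<omega>. f (s, Y \<omega>) \<partial>M) \<partial>distr M S X)"
    using ind by (rule nn_integral_indep_var) measurable
  also have "\<dots> = (\<integral>\<^sup>+s. ennreal (c * g s) \<partial>distr M S X)"
    using fibre f_nonneg by (intro nn_integral_cong) (simp add: nn_integral_eq_integral has_bochner_integral_iff)
  also have "\<dots> = ennreal c * (\<integral>\<^sup>+\<omega>. ennreal (g (X \<omega>)) \<partial>M)"
    using \<open>0 \<le> c\<close> g_nonneg by (simp add: nn_integral_distr ennreal_mult nn_integral_cmult)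
  finally have "enn2real (\<integral>\<^sup>+\<omega>. f (X \<omega>, Y \<omega>) \<partial>M) = c * enn2real (\<integral>\<^sup>+\<omega>. ennreal (g (X \<omega>)) \<partial>M)"
    using \<open>0 \<le> c\<close> by (simp add: enn2real_mult)
  then show ?thesis
    using f_nonneg g_nonneg by (simp add: integral_eq_nn_integral)
qed

lemma nn_integral_normal_density_relu_power:
  assumes "0 < \<sigma>" "0 < q"
  shows "(\<integral>\<^sup>+x. ennreal (normal_density 0 \<sigma> x * relu x ^ (2 * q)) \<partial>lborel)
         = ennreal (fact (2 * q) / ((2 / \<sigma>\<^sup>2) ^ q * fact q) / 2)"
proof -
  define f where "f x = normal_density 0 \<sigma> x * relu x ^ (2 * q)" for x
  define V where "V = fact (2 * q) / ((2 / \<sigma>\<^sup>2) ^ q * fact q :: real)"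
  have [measurable]: "f \<in> borel_measurable borel"
    unfolding f_def[abs_def] by measurable
  have f_nonneg: "0 \<le> f x" for x
    unfolding f_def by (simp add: relu_nonneg)
  \<comment> \<open>fails for \<open>q = 0\<close>, where \<open>relu x ^ 0 = 1\<close> on both half-lines\<close>
  have f_reflect: "f x + f (- x) = normal_density 0 \<sigma> x * x ^ (2 * q)" for x
    using \<open>0 < q\<close> by (cases "0 \<le> x") (auto simp: f_def relu_def normal_density_def power_mult)
  have "(\<integral>\<^sup>+x. f (- x) \<partial>lborel) = (\<integral>\<^sup>+x. f x \<partial>lborel)"
    by (subst lborel_distr_uminus[symmetric]) (simp add: nn_integral_distr)
  then have "(\<integral>\<^sup>+x. f x \<partial>lborel) + (\<integral>\<^sup>+x. f x \<partial>lborel) = (\<integral>\<^sup>+x. ennreal (f x + f (- x)) \<partial>lborel)"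
    using f_nonneg by (simp add: nn_integral_add)
  also have "\<dots> = ennreal V"
    unfolding f_reflect using normal_moment_even[OF \<open>0 < \<sigma>\<close>, of 0 q]
    by (subst nn_integral_eq_integral) (auto simp: V_def has_bochner_integral_iff)
  finally have "(\<integral>\<^sup>+x. f x \<partial>lborel) + (\<integral>\<^sup>+x. f x \<partial>lborel) = ennreal V" .
  moreover have "a = ennreal (V / 2)" if "a + a = ennreal V" for a :: ennreal
  proof -
    have "0 \<le> V"
      by (simp add: V_def)
    with that show ?thesis
      by (metis add_divide_distrib_ennreal ennreal_divide_numeral ennreal_plus field_sum_of_halves
          le_ennreal_iff le_iff_add zero_le_double_add_iff_zero_le_single_add)
  qed
  ultimately have "(\<integral>\<^sup>+x. f x \<partial>lborel) = ennreal (V / 2)"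
    by blast
  then show ?thesis
    by (simp add: f_def V_def)
qed

lemma (in prob_space) has_bochner_integral_relu_power_normal:
  assumes "0 < \<sigma>" "distributed M lborel Z (normal_density 0 \<sigma>)" "0 < q"
  shows "has_bochner_integral M (\<lambda>\<omega>. relu (Z \<omega>) ^ (2 * q)) (fact (2 * q) / ((2 / \<sigma>\<^sup>2) ^ q * fact q) / 2)"
proof (rule has_bochner_integral_nn_integral)
  have [measurable]: "Z \<in> borel_measurable M"
    using distributed_measurable[OF assms(2)] by simp
  show "(\<lambda>\<omega>. relu (Z \<omega>) ^ (2 * q)) \<in> borel_measurable M"
    by measurable
  have "(\<integral>\<^sup>+\<omega>. relu (Z \<omega>) ^ (2 * q) \<partial>M)
      = (\<integral>\<^sup>+x. ennreal (normal_density 0 \<sigma> x) * ennreal (relu x ^ (2 * q)) \<partial>lborel)"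
    using assms(2) by (subst distributed_nn_integral[symmetric]) auto
  also have "\<dots> = ennreal (fact (2 * q) / ((2 / \<sigma>\<^sup>2) ^ q * fact q) / 2)"
    using nn_integral_normal_density_relu_power[OF assms(1,3)]
    by (simp add: ennreal_mult'[symmetric] relu_nonneg)
  finally show "(\<integral>\<^sup>+\<omega>. relu (Z \<omega>) ^ (2 * q) \<partial>M) = ennreal (fact (2 * q) / ((2 / \<sigma>\<^sup>2) ^ q * fact q) / 2)" .
qed (simp_all add: relu_nonneg)

lemma (in prob_space) distributed_weighted_sum_std_normal:
  fixes G :: "'i \<Rightarrow> 'a \<Rightarrow> real"
  assumes J: "finite J" and ind: "indep_vars (\<lambda>_. borel) G J"
    and std: "\<And>j. j \<in> J \<Longrightarrow> distributed M lborel (G j) std_normal_density"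
    and pos: "0 < (\<Sum>j\<in>J. (y j)\<^sup>2)"
  shows "distributed M lborel (\<lambda>\<omega>. \<Sum>j\<in>J. G j \<omega> * y j) (normal_density 0 (sqrt (\<Sum>j\<in>J. (y j)\<^sup>2)))"
proof -
  \<comment> \<open>\<open>sum_indep_normal\<close> needs positive variances, so drop the indices with \<open>y j = 0\<close>\<close>
  define J' where "J' = {j \<in> J. y j \<noteq> 0}"
  have J'_sums: "(\<Sum>j\<in>J'. h j) = (\<Sum>j\<in>J. h j)" if "\<And>j. y j = 0 \<Longrightarrow> h j = 0" for h :: "'i \<Rightarrow> real"
    using J that by (intro sum.mono_neutral_left) (auto simp: J'_def)
  have "J' \<noteq> {}"
    using pos J'_sums[of "\<lambda>j. (y j)\<^sup>2"] by auto
  moreover have "indep_vars (\<lambda>_. borel) (\<lambda>j \<omega>. G j \<omega> * y j) J'"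
    by (rule indep_vars_compose2[OF indep_vars_subset[OF ind]]) (auto simp: J'_def)
  moreover have "distributed M lborel (\<lambda>\<omega>. G j \<omega> * y j) (normal_density 0 \<bar>y j\<bar>)" if "j \<in> J'" for j
    using normal_density_affine[OF std, of j "y j" 0] that by (simp add: J'_def mult.commute)
  ultimately have "distributed M lborel (\<lambda>\<omega>. \<Sum>j\<in>J'. G j \<omega> * y j)
      (normal_density (\<Sum>j\<in>J'. 0) (sqrt (\<Sum>j\<in>J'. \<bar>y j\<bar>\<^sup>2)))"
    using J by (intro sum_indep_normal) (auto simp: J'_def)
  then show ?thesis
    by (simp add: J'_sums)
qed

text \<open>For \<open>y = 0\<close> both sides vanish, the right one because \<open>2 / 0 = 0\<close>.\<close>

lemma (in prob_space) has_bochner_integral_relu_weighted_sum_power: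
  fixes G :: "'i \<Rightarrow> 'a \<Rightarrow> real"
  assumes J: "finite J" and ind: "indep_vars (\<lambda>_. borel) G J"
    and std: "\<And>j. j \<in> J \<Longrightarrow> distributed M lborel (G j) std_normal_density"
    and "0 < q"
  shows "has_bochner_integral M (\<lambda>\<omega>. relu (\<Sum>j\<in>J. G j \<omega> * y j) ^ (2 * q))
           (fact (2 * q) / ((2 / (\<Sum>j\<in>J. (y j)\<^sup>2)) ^ q * fact q) / 2)"
proof (cases "(\<Sum>j\<in>J. (y j)\<^sup>2) = 0")
  case True
  then have "\<forall>j\<in>J. y j = 0"
    using J by (simp add: sum_nonneg_eq_0_iff)
  then show ?thesis
    using True \<open>0 < q\<close> by (simp add: relu_def zero_power has_bochner_integral_zero)
next
  case False
  then have pos: "0 < (\<Sum>j\<in>J. (y j)\<^sup>2)"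
    by (simp add: order_neq_le_trans sum_nonneg)
  show ?thesis
    using has_bochner_integral_relu_power_normal[OF _ distributed_weighted_sum_std_normal[OF J ind std pos] \<open>0 < q\<close>] pos
    by simp
qed

lemma (in prob_space) has_bochner_integral_power2_sum_pairwise_indep:
  fixes R :: "'i \<Rightarrow> 'a \<Rightarrow> real"
  assumes I: "finite I"
    and mean: "\<And>i. i \<in> I \<Longrightarrow> has_bochner_integral M (R i) \<mu>"
    and second: "\<And>i. i \<in> I \<Longrightarrow> has_bochner_integral M (\<lambda>\<omega>. (R i \<omega>)\<^sup>2) \<nu>"
    and indep: "\<And>i k. i \<in> I \<Longrightarrow> k \<in> I \<Longrightarrow> i \<noteq> k \<Longrightarrow> indep_var borel (R i) borel (R k)"
  shows "has_bochner_integral M (\<lambda>\<omega>. (\<Sum>i\<in>I. R i \<omega>)\<^sup>2)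
           (real (card I) * \<nu> + real (card I) * (real (card I) - 1) * \<mu>\<^sup>2)"
proof -
  have cross: "has_bochner_integral M (\<lambda>\<omega>. R i \<omega> * R k \<omega>) (\<mu>\<^sup>2 + (if i = k then \<nu> - \<mu>\<^sup>2 else 0))"
    if "i \<in> I" "k \<in> I" for i k
  proof (cases "i = k")
    case True
    then show ?thesis
      using second[OF that(1)] by (simp add: power2_eq_square)
  next
    case False
    have "integrable M (R i)" "integrable M (R k)"
      using mean that by (auto simp: has_bochner_integral_iff)
    with indep[OF that False] show ?thesis
      using mean that False
      by (simp add: has_bochner_integral_iff indep_var_integrable indep_var_lebesgue_integral power2_eq_square)
  qed
  have "has_bochner_integral M (\<lambda>\<omega>. \<Sum>i\<in>I. \<Sum>k\<in>I. R i \<omega> * R k \<omega>)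
      (\<Sum>i\<in>I. \<Sum>k\<in>I. \<mu>\<^sup>2 + (if i = k then \<nu> - \<mu>\<^sup>2 else 0))"
    using cross by (intro has_bochner_integral_sum) auto
  moreover have "(\<Sum>i\<in>I. \<Sum>k\<in>I. \<mu>\<^sup>2 + (if i = k then \<nu> - \<mu>\<^sup>2 else 0))
      = real (card I) * \<nu> + real (card I) * (real (card I) - 1) * \<mu>\<^sup>2"
    using I by (simp add: sum.distrib algebra_simps)
  ultimately show ?thesis
    by (simp add: power2_eq_square sum_product)
qed

definition relu_layer :: "nat \<Rightarrow> (nat \<Rightarrow> nat \<Rightarrow> real) \<Rightarrow> (nat \<Rightarrow> real) \<Rightarrow> nat \<Rightarrow> real" where
  "relu_layer m V y = (\<lambda>i. sqrt 2 * relu (1 / sqrt (real m) * (\<Sum>j<m. V i j * y j)))"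

lemma relu_net_Suc_eq_relu_layer:
  "relu_net n W x (Suc l) = relu_layer (n l) (W (Suc l)) (relu_net n W x l)"
  by (simp add: relu_layer_def)

lemma relu_layer_cong:
  "(\<And>j. j < m \<Longrightarrow> V i j = V' i j) \<Longrightarrow> (\<And>j. j < m \<Longrightarrow> y j = y' j)
    \<Longrightarrow> relu_layer m V y i = relu_layer m V' y' i"
  unfolding relu_layer_def by simp

lemma power2_vnorm_relu_layer:
  "(vnorm p (relu_layer m V y))\<^sup>2 = 2 / real m * (\<Sum>i<p. (relu (\<Sum>j<m. V i j * y j))\<^sup>2)"
proof -
  have "relu (z / sqrt (real m)) = relu z / sqrt (real m)" for z
    using relu_mult_nonneg[of "1 / sqrt (real m)" z] by simp
  then have "(relu_layer m V y i)\<^sup>2 = 2 / real m * (relu (\<Sum>j<m. V i j * y j))\<^sup>2" for i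
    by (simp add: relu_layer_def power_mult_distrib power_divide)
  then show ?thesis
    by (simp add: power2_vnorm sum_distrib_left)
qed

lemma (in prob_space) relu_weighted_sum_std_normal_moments:
  fixes G :: "'i \<Rightarrow> 'a \<Rightarrow> real" and y :: "'i \<Rightarrow> real"
  assumes J: "finite J" and ind: "indep_vars (\<lambda>_. borel) G J"
    and std: "\<And>j. j \<in> J \<Longrightarrow> distributed M lborel (G j) std_normal_density"
  defines "s \<equiv> \<Sum>j\<in>J. (y j)\<^sup>2"
  shows "has_bochner_integral M (\<lambda>\<omega>. (relu (\<Sum>j\<in>J. G j \<omega> * y j))\<^sup>2) (s / 2)"
    and "has_bochner_integral M (\<lambda>\<omega>. ((relu (\<Sum>j\<in>J. G j \<omega> * y j))\<^sup>2)\<^sup>2) (3 * s\<^sup>2 / 2)"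
proof -
  note power = has_bochner_integral_relu_weighted_sum_power[OF J ind std, where y = y, folded s_def]
  show "has_bochner_integral M (\<lambda>\<omega>. (relu (\<Sum>j\<in>J. G j \<omega> * y j))\<^sup>2) (s / 2)"
    using power[of 1] by simp
  have "fact (2 * 2) / ((2 / s) ^ 2 * fact 2) / 2 = 3 * s\<^sup>2 / (2 :: real)"
    by (cases "s = 0") (simp_all add: fact_numeral field_simps power2_eq_square)
  with power[of 2]
  have "has_bochner_integral M (\<lambda>\<omega>. (relu (\<Sum>j\<in>J. G j \<omega> * y j)) ^ (2 * 2)) (3 * s\<^sup>2 / 2)"
    by (simp only:)
  then show "has_bochner_integral M (\<lambda>\<omega>. ((relu (\<Sum>j\<in>J. G j \<omega> * y j))\<^sup>2)\<^sup>2) (3 * s\<^sup>2 / 2)"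
    by (simp add: power_mult[symmetric])
qed

lemma (in prob_space) indep_var_weighted_row_sums:
  fixes G :: "'i \<Rightarrow> 'j \<Rightarrow> 'a \<Rightarrow> real"
  assumes ind: "indep_vars (\<lambda>_. borel) (\<lambda>(i, j). G i j) (I \<times> J)"
    and "i \<in> I" "k \<in> I" "i \<noteq> k" and [measurable]: "h \<in> borel_measurable borel"
  shows "indep_var borel (\<lambda>\<omega>. h (\<Sum>j\<in>J. G i j \<omega> * y j)) borel (\<lambda>\<omega>. h (\<Sum>j\<in>J. G k j \<omega> * y j))"
proof -
  define row where "row i r = h (\<Sum>j\<in>J. r (i, j) * y j)" for i and r :: "'i \<times> 'j \<Rightarrow> real"
  have [measurable]: "row i \<in> borel_measurable (PiM K (\<lambda>_. borel))" for i K
    unfolding row_def[abs_def] by measurable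
  have "indep_var borel (row i \<circ> (\<lambda>\<omega>. restrict (\<lambda>t. (\<lambda>(i, j). G i j) t \<omega>) ({i} \<times> J)))
                  borel (row k \<circ> (\<lambda>\<omega>. restrict (\<lambda>t. (\<lambda>(i, j). G i j) t \<omega>) ({k} \<times> J)))"
    using assms by (intro indep_var_compose[OF indep_var_restrict[OF ind]]) auto
  moreover have "row i (restrict r ({i} \<times> J)) = row i r" for i r
    by (simp add: row_def)
  ultimately show ?thesis
    by (simp add: row_def comp_def case_prod_beta')
qed

lemma (in prob_space) relu_layer_moments:
  fixes G :: "nat \<Rightarrow> nat \<Rightarrow> 'a \<Rightarrow> real"
  assumes ind: "indep_vars (\<lambda>_. borel) (\<lambda>(i, j). G i j) ({..<p} \<times> {..<m})"
    and std: "\<And>i j. i < p \<Longrightarrow> j < m \<Longrightarrow> distributed M lborel (G i j) std_normal_density"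
  shows "has_bochner_integral M (\<lambda>\<omega>. (vnorm p (relu_layer m (\<lambda>i j. G i j \<omega>) y))\<^sup>2)
           (real p / real m * (vnorm m y)\<^sup>2)"
    and "has_bochner_integral M (\<lambda>\<omega>. (vnorm p (relu_layer m (\<lambda>i j. G i j \<omega>) y)) ^ 4)
           (real p * (real p + 5) / (real m)\<^sup>2 * (vnorm m y) ^ 4)"
proof -
  define s where "s = (\<Sum>j<m. (y j)\<^sup>2)"
  define R where "R i = (\<lambda>\<omega>. (relu (\<Sum>j<m. G i j \<omega> * y j))\<^sup>2)" for i
  have four: "a ^ 4 = (a\<^sup>2)\<^sup>2" for a :: real
    by simp
  have row_indep: "indep_vars (\<lambda>_. borel) (\<lambda>j. G i j) {..<m}" if "i < p" for i
    using indep_vars_reindex[OF ind, of "\<lambda>j. (i, j)" "{..<m}"] that by (auto simp: inj_on_def)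
  have R_mean: "has_bochner_integral M (R i) (s / 2)" if "i < p" for i
    using relu_weighted_sum_std_normal_moments(1)[OF _ row_indep std, of i y] that
    by (simp add: R_def s_def)
  have R_second: "has_bochner_integral M (\<lambda>\<omega>. (R i \<omega>)\<^sup>2) (3 * s\<^sup>2 / 2)" if "i < p" for i
    using relu_weighted_sum_std_normal_moments(2)[OF _ row_indep std, of i y] that
    by (simp add: R_def s_def)
  have R_indep: "indep_var borel (R i) borel (R k)" if "i < p" "k < p" "i \<noteq> k" for i k
    unfolding R_def using that by (intro indep_var_weighted_row_sums[OF ind]) auto
  have layer_R: "(vnorm p (relu_layer m (\<lambda>i j. G i j \<omega>) y))\<^sup>2 = 2 / real m * (\<Sum>i<p. R i \<omega>)" for \<omega>
    by (simp add: power2_vnorm_relu_layer R_def)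
  have "has_bochner_integral M (\<lambda>\<omega>. 2 / real m * (\<Sum>i<p. R i \<omega>)) (2 / real m * (\<Sum>i<p. s / 2))"
    using R_mean by (intro has_bochner_integral_mult_right has_bochner_integral_sum) auto
  then show "has_bochner_integral M (\<lambda>\<omega>. (vnorm p (relu_layer m (\<lambda>i j. G i j \<omega>) y))\<^sup>2)
      (real p / real m * (vnorm m y)\<^sup>2)"
    unfolding layer_R by (simp add: power2_vnorm s_def)
  have "has_bochner_integral M (\<lambda>\<omega>. (\<Sum>i<p. R i \<omega>)\<^sup>2)
      (real p * (3 * s\<^sup>2 / 2) + real p * (real p - 1) * (s / 2)\<^sup>2)"
    using has_bochner_integral_power2_sum_pairwise_indep[of "{..<p}" R "s / 2" "3 * s\<^sup>2 / 2"]
      R_mean R_second R_indep by simp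
  then have "has_bochner_integral M (\<lambda>\<omega>. (2 / real m)\<^sup>2 * (\<Sum>i<p. R i \<omega>)\<^sup>2)
      ((2 / real m)\<^sup>2 * (real p * (3 * s\<^sup>2 / 2) + real p * (real p - 1) * (s / 2)\<^sup>2))"
    by (rule has_bochner_integral_mult_right)
  moreover have "(vnorm p (relu_layer m (\<lambda>i j. G i j \<omega>) y)) ^ 4 = (2 / real m)\<^sup>2 * (\<Sum>i<p. R i \<omega>)\<^sup>2" for \<omega>
    unfolding four layer_R by (simp add: power_mult_distrib power_divide)
  moreover have "(2 / real m)\<^sup>2 * (real p * (3 * s\<^sup>2 / 2) + real p * (real p - 1) * (s / 2)\<^sup>2)
      = real p * (real p + 5) / (real m)\<^sup>2 * (vnorm m y) ^ 4"
    unfolding four power2_vnorm s_def[symmetric] by (cases "m = 0") (simp_all add: field_simps power2_eq_square)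
  ultimately show "has_bochner_integral M (\<lambda>\<omega>. (vnorm p (relu_layer m (\<lambda>i j. G i j \<omega>) y)) ^ 4)
      (real p * (real p + 5) / (real m)\<^sup>2 * (vnorm m y) ^ 4)"
    by simp
qed

lemma relu_net_cong:
  assumes "\<And>k i j. k \<in> {1..l} \<Longrightarrow> i < n k \<Longrightarrow> j < n (k - 1) \<Longrightarrow> W k i j = W' k i j"
    and "i < n l"
  shows "relu_net n W x l i = relu_net n W' x l i"
  using assms
proof (induction l arbitrary: i)
  case (Suc l)
  then have "relu_net n W x l j = relu_net n W' x l j" if "j < n l" for j
    using that by auto
  with Suc.prems show ?case
    unfolding relu_net_Suc_eq_relu_layer by (intro relu_layer_cong) auto
qed simp

lemma borel_measurable_relu_net [measurable]:
  "(\<lambda>w. relu_net n (\<lambda>k i j. w (k, i, j)) x l i) \<in> borel_measurable (PiM S (\<lambda>_. borel))"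
proof (induction l arbitrary: i)
  case (Suc l)
  note Suc.IH [measurable]
  show ?case
    by simp
qed simp

lemma (in prob_space) integral_vnorm_power_relu_net_Suc:
  fixes W :: "nat \<Rightarrow> nat \<Rightarrow> nat \<Rightarrow> 'a \<Rightarrow> real"
  assumes ind: "indep_vars (\<lambda>_. borel) (\<lambda>(k, i, j). W k i j)
      {(k, i, j). k \<in> {1..Suc l} \<and> i < n k \<and> j < n (k - 1)}"
    and "0 \<le> c"
    and layer: "\<And>y. has_bochner_integral M
      (\<lambda>\<omega>. (vnorm (n (Suc l)) (relu_layer (n l) (\<lambda>i j. W (Suc l) i j \<omega>) y)) ^ q) (c * (vnorm (n l) y) ^ q)"
  shows "(\<integral>\<omega>. (vnorm (n (Suc l)) (relu_net n (\<lambda>k i j. W k i j \<omega>) x (Suc l))) ^ q \<partial>M)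
       = c * (\<integral>\<omega>. (vnorm (n l) (relu_net n (\<lambda>k i j. W k i j \<omega>) x l)) ^ q \<partial>M)"
proof -
  define A where "A = {(k, i, j). k \<in> {1..l} \<and> i < n k \<and> j < n (k - 1)}"
  define B where "B = {(k, i, j). k = Suc l \<and> i < n (Suc l) \<and> j < n l}"
  define restr where "restr K \<omega> = restrict (\<lambda>t. (\<lambda>(k, i, j). W k i j) t \<omega>) K" for K \<omega>
  have indep: "indep_var (PiM A (\<lambda>_. borel)) (restr A) (PiM B (\<lambda>_. borel)) (restr B)"
    unfolding restr_def by (rule indep_var_restrict[OF ind]) (auto simp: A_def B_def)
  define net where "net a = relu_net n (\<lambda>k i j. a (k, i, j)) x l" for a
  define f where "f z = (vnorm (n (Suc l)) (relu_layer (n l) (\<lambda>i j. snd z (Suc l, i, j)) (net (fst z)))) ^ q"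
    for z :: "((nat \<times> nat \<times> nat) \<Rightarrow> real) \<times> ((nat \<times> nat \<times> nat) \<Rightarrow> real)"
  define g where "g a = (vnorm (n l) (net a)) ^ q" for a
  have net_restr: "net (restr A \<omega>) j = relu_net n (\<lambda>k i j. W k i j \<omega>) x l j" if "j < n l" for \<omega> j
    unfolding net_def using that by (intro relu_net_cong) (auto simp: restr_def A_def)
  have f_restr: "f (a, restr B \<omega>) = (vnorm (n (Suc l)) (relu_layer (n l) (\<lambda>i j. W (Suc l) i j \<omega>) (net a))) ^ q"
    for a \<omega>
    unfolding f_def by (intro arg_cong[where f="\<lambda>v. v ^ q"] vnorm_cong relu_layer_cong) (auto simp: restr_def B_def)
  have "(\<integral>\<omega>. f (restr A \<omega>, restr B \<omega>) \<partial>M) = c * (\<integral>\<omega>. g (restr A \<omega>) \<partial>M)"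
  proof (rule integral_indep_var_fibrewise[OF indep])
    show "f \<in> borel_measurable (PiM A (\<lambda>_. borel) \<Otimes>\<^sub>M PiM B (\<lambda>_. borel))"
      unfolding f_def[abs_def] net_def vnorm_def relu_layer_def by measurable
    show "g \<in> borel_measurable (PiM A (\<lambda>_. borel))"
      unfolding g_def[abs_def] net_def vnorm_def by measurable
    show "has_bochner_integral M (\<lambda>\<omega>. f (a, restr B \<omega>)) (c * g a)" for a
      using layer by (simp add: f_restr g_def)
  qed (simp_all add: f_def g_def vnorm_nonneg \<open>0 \<le> c\<close>)
  moreover have "f (restr A \<omega>, restr B \<omega>) = (vnorm (n (Suc l)) (relu_net n (\<lambda>k i j. W k i j \<omega>) x (Suc l))) ^ q" for \<omega>
    unfolding f_restr relu_net_Suc_eq_relu_layer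
    by (intro arg_cong[where f="\<lambda>v. v ^ q"] vnorm_cong relu_layer_cong) (simp_all add: net_restr)
  moreover have "g (restr A \<omega>) = (vnorm (n l) (relu_net n (\<lambda>k i j. W k i j \<omega>) x l)) ^ q" for \<omega>
    unfolding g_def by (intro arg_cong[where f="\<lambda>v. v ^ q"] vnorm_cong) (simp add: net_restr)
  ultimately show ?thesis
    by simp
qed

theorem proposition4:
  fixes M :: "'a measure" and n :: "nat \<Rightarrow> nat" and L l :: nat
    and W :: "nat \<Rightarrow> nat \<Rightarrow> nat \<Rightarrow> 'a \<Rightarrow> real" and x :: "nat \<Rightarrow> real"
  assumes "prob_space M"
    and "\<forall>k\<le>L. n k > 0"
    and "prob_space.indep_vars M (\<lambda>_. borel) (\<lambda>(k, i, j). W k i j)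
           {(k, i, j). k \<in> {1..L} \<and> i < n k \<and> j < n (k - 1)}"
    and "\<forall>k\<in>{1..L}. \<forall>i<n k. \<forall>j<n (k - 1). distributed M lborel (W k i j) std_normal_density"
    and "l \<in> {1..L}"
  shows "(\<integral>\<omega>. (vnorm (n l) (relu_net n (\<lambda>k i j. W k i j \<omega>) x l))^2 \<partial>M)
           = real (n l) / real (n (l - 1)) *
             (\<integral>\<omega>. (vnorm (n (l - 1)) (relu_net n (\<lambda>k i j. W k i j \<omega>) x (l - 1)))^2 \<partial>M)
       \<and> (\<integral>\<omega>. (vnorm (n l) (relu_net n (\<lambda>k i j. W k i j \<omega>) x l))^4 \<partial>M)
           = real (n l) * (real (n l) + 5) / (real (n (l - 1)))^2 *
             (\<integral>\<omega>. (vnorm (n (l - 1)) (relu_net n (\<lambda>k i j. W k i j \<omega>) x (l - 1)))^4 \<partial>M)"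
proof -
  \<comment> \<open>the widths need not be positive: for \<open>n (l - 1) = 0\<close> both sides are \<open>0\<close>, as \<open>x / 0 = 0\<close>\<close>
  interpret prob_space M by fact
  obtain l' where l: "l = Suc l'" and "l \<le> L"
    using assms(5) by (cases l) auto
  have net_indep: "indep_vars (\<lambda>_. borel) (\<lambda>(k, i, j). W k i j)
      {(k, i, j). k \<in> {1..Suc l'} \<and> i < n k \<and> j < n (k - 1)}"
    using assms(3) by (rule indep_vars_subset) (use \<open>l \<le> L\<close> l in auto)
  have "indep_vars (\<lambda>_. borel) (\<lambda>t. (\<lambda>(k, i, j). W k i j) (Pair l t)) ({..<n l} \<times> {..<n l'})"
    by (rule indep_vars_reindex[OF assms(3)]) (use \<open>l \<le> L\<close> in \<open>auto simp: l inj_on_def\<close>)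
  then have layer_indep: "indep_vars (\<lambda>_. borel) (\<lambda>(i, j). W (Suc l') i j) ({..<n (Suc l')} \<times> {..<n l'})"
    by (simp add: case_prod_beta' l)
  have layer_std: "\<And>i j. i < n (Suc l') \<Longrightarrow> j < n l' \<Longrightarrow> distributed M lborel (W (Suc l') i j) std_normal_density"
    using assms(4) \<open>l \<le> L\<close> by (auto simp: l)
  note layer = relu_layer_moments[OF layer_indep layer_std]
  show ?thesis
    using integral_vnorm_power_relu_net_Suc[OF net_indep _ layer(1)]
      integral_vnorm_power_relu_net_Suc[OF net_indep _ layer(2)]
    by (simp add: l)
qed

end
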